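(* On the $L\times L$ qubit grid, define $$C_{2D}=U^\dagger C_Z U,\qquad U=C_\leftarrow C_\uparrow,\qquad C_Z=\prod_{c=0}^{L-1}\prod_{r=0}^{L-2}\mathrm{CZ}_{(r,c),(r+1,c)},$$ and $W=\Bigl(\prod_{r\text{ odd}}\prod_{c}Z_{(r,c)}\Bigr)C_{2D}$. Then $W$ maps the JW encoding with ordering $m_Z$ to the JW encoding with ordering $m_S$, and also maps the JW encoding with ordering $m_S$ to that with ordering $m_Z$. In particular, $W$ consists of $\mathcal O(N)$ nearest-neighbour CNOT/CZ gates and single-qubit $Z$ gates and has depth $\mathcal O(L)=\mathcal O(\sqrt N)$ on the nearest-neighbour square lattice, $N=L^2$.
   Context: Qubits sit on the grid $\{0,\dots,L-1\}^2$ (sites $(r,c)$, row $r$, column $c$), with nearest-neighbour connectivity (two-qubit gates only between sites at $\ell_1$-distance 1). Fermionic mode $j$ is identified with qubit $j$. A canonical ordering is a bijection $m$ from sites to $\{0,\dots,N-1\}$; the JW encoding with ordering $m$ has Majoranas $\chi^{(m)}_{2j}=X_j\prod_{k:m(k)<m(j)}Z_k$, $\chi^{(m)}_{2j+1}=Y_j\prod_{k:m(k)<m(j)}Z_k$, and a unitary $W$ maps the encoding with ordering $m$ to that with $m'$ if $W\chi^{(m)}_aW^\dagger=\chi^{(m')}_a$ for all $a$. The orderings are $m_Z(r,c)=Lc+(L-1-r)$ and $m_S(r,c)=Lr+c$ for $r$ even, $m_S(r,c)=Lr+(L-1-c)$ for $r$ odd. $x_{(r,c)}$ is the computational-basis bit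 of qubit $(r,c)$. $C_\uparrow$ is the CNOT circuit (CNOT ladders along columns, gates $\mathrm{CNOT}_{(r+1,c)\to(r,c)}$ in order of decreasing $r$) acting by $x_{(r,c)}\mapsto\bigoplus_{r'\ge r}x_{(r',c)}$; $C_\leftarrow$ is the CNOT circuit (ladders along even rows, gates $\mathrm{CNOT}_{(r,c+1)\to(r,c)}$ in order of decreasing $c$) acting by $x_{(r,c)}\mapsto\bigoplus_{c'\ge c}x_{(r,c')}$ for even $r$ and trivially on odd rows. *)

theory Defs
  imports Complex_Main
begin

type_synonym site = "nat \<times> nat"   (* (r, c): row r, column c *)
type_synonym config = "site \<Rightarrow> bool"  (* computational basis state: bit x_(r,c) *)
type_synonym qmat = "config \<Rightarrow> config \<Rightarrow> complex"  (* matrix entries <x|A|y> *)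

definition grid :: "nat \<Rightarrow> site set" where
  "grid L = {(r, c). r < L \<and> c < L}"

definition configs :: "nat \<Rightarrow> config set" where
  "configs L = {x. \<forall>k. k \<notin> grid L \<longrightarrow> \<not> x k}"

definition mmul :: "nat \<Rightarrow> qmat \<Rightarrow> qmat \<Rightarrow> qmat" where
  "mmul L A B = (\<lambda>x y. \<Sum>z\<in>configs L. A x z * B z y)"

definition adj :: "qmat \<Rightarrow> qmat" where
  "adj A = (\<lambda>x y. cnj (A y x))"

definition ident :: qmat where
  "ident = (\<lambda>x y. if x = y then 1 else 0)"

definition flip :: "site \<Rightarrow> config \<Rightarrow> config" where
  "flip j y = y(j := \<not> y j)"

definition Xop :: "site \<Rightarrow> qmat" where
  "Xop j = (\<lambda>x y. if x = flip j y then 1 else 0)"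

definition Yop :: "site \<Rightarrow> qmat" where
  "Yop j = (\<lambda>x y. if x = flip j y then (if y j then - \<i> else \<i>) else 0)"

definition Zop :: "site \<Rightarrow> qmat" where
  "Zop j = (\<lambda>x y. if x = y then (if y j then -1 else 1) else 0)"

definition CNOTop :: "site \<Rightarrow> site \<Rightarrow> qmat" where
  "CNOTop a t = (\<lambda>x y. if x = y(t := (y t \<noteq> y a)) then 1 else 0)"

definition CZop :: "site \<Rightarrow> site \<Rightarrow> qmat" where
  "CZop a b = (\<lambda>x y. if x = y then (if y a \<and> y b then -1 else 1) else 0)"

datatype gate = CNOT site site | CZ site site | Zg site

fun gate_mat :: "gate \<Rightarrow> qmat" where
  "gate_mat (CNOT a t) = CNOTop a t"
| "gate_mat (CZ a b) = CZop a b"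
| "gate_mat (Zg j) = Zop j"

fun gate_qubits :: "gate \<Rightarrow> site set" where
  "gate_qubits (CNOT a t) = {a, t}"
| "gate_qubits (CZ a b) = {a, b}"
| "gate_qubits (Zg j) = {j}"

definition l1dist :: "site \<Rightarrow> site \<Rightarrow> nat" where
  "l1dist p q = (if fst p \<le> fst q then fst q - fst p else fst p - fst q)
              + (if snd p \<le> snd q then snd q - snd p else snd p - snd q)"

fun nn_gate :: "nat \<Rightarrow> gate \<Rightarrow> bool" where
  "nn_gate L (CNOT a t) = (a \<in> grid L \<and> t \<in> grid L \<and> l1dist a t = 1)"
| "nn_gate L (CZ a b) = (a \<in> grid L \<and> b \<in> grid L \<and> l1dist a b = 1)"
| "nn_gate L (Zg j) = (j \<in> grid L)"

text \<open>A circuit is a list of gates in temporal order (first gate applied first):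
  the matrix of [g1,...,gn] is gn ... g1.\<close>
definition circ_mat :: "nat \<Rightarrow> gate list \<Rightarrow> qmat" where
  "circ_mat L gs = foldl (\<lambda>M g. mmul L (gate_mat g) M) ident gs"

text \<open>A layer: gates acting on pairwise disjoint sets of qubits (executed in one time step).\<close>
definition is_layer :: "gate list \<Rightarrow> bool" where
  "is_layer gs = (\<forall>i<length gs. \<forall>j<length gs. i \<noteq> j \<longrightarrow>
                     gate_qubits (gs ! i) \<inter> gate_qubits (gs ! j) = {})"

text \<open>Product of Z_k over a set S of qubits (these commute); written out as the diagonal matrix
  with entry (-1)^(number of k in S with x_k = 1).\<close>
definition Zprod :: "site set \<Rightarrow> qmat" where
  "Zprod S = (\<lambda>x y. if x = y then (-1) ^ card {k\<in>S. y k} else 0)"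

text \<open>Majoranas of the JW encoding with ordering m: index (j, False) is chi_{2j},
  index (j, True) is chi_{2j+1}.\<close>
definition majorana :: "nat \<Rightarrow> (site \<Rightarrow> nat) \<Rightarrow> site \<times> bool \<Rightarrow> qmat" where
  "majorana L m a = (let j = fst a in
     mmul L (if snd a then Yop j else Xop j) (Zprod {k\<in>grid L. m k < m j}))"

definition maps_encoding :: "nat \<Rightarrow> qmat \<Rightarrow> (site \<Rightarrow> nat) \<Rightarrow> (site \<Rightarrow> nat) \<Rightarrow> bool" where
  "maps_encoding L W m m' =
     (\<forall>j\<in>grid L. \<forall>b. mmul L (mmul L W (majorana L m (j, b))) (adj W) = majorana L m' (j, b))"

definition mZ :: "nat \<Rightarrow> site \<Rightarrow> nat" where
  "mZ L s = L * snd s + (L - 1 - fst s)"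

definition mS :: "nat \<Rightarrow> site \<Rightarrow> nat" where
  "mS L s = (if even (fst s) then L * fst s + snd s else L * fst s + (L - 1 - snd s))"

definition C_up_gates :: "nat \<Rightarrow> gate list" where
  "C_up_gates L = concat (map (\<lambda>c. map (\<lambda>r. CNOT (r + 1, c) (r, c)) (rev [0..<L - 1])) [0..<L])"

definition C_left_gates :: "nat \<Rightarrow> gate list" where
  "C_left_gates L = concat (map (\<lambda>r. map (\<lambda>c. CNOT (r, c + 1) (r, c)) (rev [0..<L - 1]))
                              (filter even [0..<L]))"

definition C_Z_gates :: "nat \<Rightarrow> gate list" where
  "C_Z_gates L = concat (map (\<lambda>c. map (\<lambda>r. CZ (r, c) (r + 1, c)) [0..<L - 1]) [0..<L])"

definition Z_odd_gates :: "nat \<Rightarrow> gate list" where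
  "Z_odd_gates L = concat (map (\<lambda>r. map (\<lambda>c. Zg (r, c)) [0..<L]) (filter odd [0..<L]))"

definition C_up :: "nat \<Rightarrow> qmat" where "C_up L = circ_mat L (C_up_gates L)"
definition C_left :: "nat \<Rightarrow> qmat" where "C_left L = circ_mat L (C_left_gates L)"
definition C_Zm :: "nat \<Rightarrow> qmat" where "C_Zm L = circ_mat L (C_Z_gates L)"
definition Uc :: "nat \<Rightarrow> qmat" where "Uc L = mmul L (C_left L) (C_up L)"
definition C2D :: "nat \<Rightarrow> qmat" where
  "C2D L = mmul L (adj (Uc L)) (mmul L (C_Zm L) (Uc L))"
definition Wc :: "nat \<Rightarrow> qmat" where
  "Wc L = mmul L (circ_mat L (Z_odd_gates L)) (C2D L)"

end

theory Submission
  imports Defs "HOL-Library.Z2"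
begin

(* Every gate is a monomial matrix (a permutation of the computational basis times a phase), and the
   CNOT circuits act on bit strings x as linear maps over GF(2): C_up replaces each bit by the parity
   of its column from that bit downwards, C_left does the same along even rows, so U = C_left C_up.
   Hence W = Z_odd U^dagger C_Z U is diagonal with entries (-1)^Q(x), where
     Q(x) = sum over vertical neighbours k, k' of (Ux)_k (Ux)_k' + parity of x on the odd rows
   is a quadratic form over GF(2).  The Majorana operators of index j flip x_j and carry the sign of
   the parity of the bits before j, so conjugation by W multiplies them by (-1)^(Q(x + e_j) + Q(x)),
   and both directions of the theorem follow from the single identity
     Q(x + e_j) + Q(x) = sum of x_k over m_Z(k) < m_Z(j) + sum of x_k over m_S(k) < m_S(j),
   which is symmetric in the two orderings.  Since Q(e_j) = 0, the left-hand side is the polar form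
   of Q at (x, e_j); summed over the rows it telescopes to three parities of x over "tails" of the
   grid, and the indicators of these three tails add up, mod 2, to those of the two sets of
   predecessors of j.
   For the depth bound the ladders are regrouped into L - 1 layers of parallel CNOTs each. *)

(* Keep + and * on bit as ring operations rather than rewriting them to XOR and AND. *)
declare add_bit_eq_xor [simp del] mult_bit_eq_and [simp del]

lemma bit_add_self [simp]: "(a::bit) + a = 0"
  by (cases a) simp_all

lemma of_bool_neq_bit: "(of_bool (P \<noteq> Q) :: bit) = of_bool P + of_bool Q"
  by (cases P; cases Q) simp_all

lemma of_nat_bit: "(of_nat n :: bit) = of_bool (odd n)"
  by (induction n) (simp_all add: of_bool_neq_bit [symmetric])

lemma sum_times_of_bool_eq: "(b::nat) < L \<Longrightarrow> (\<Sum>c<L. f c * of_bool (c = b)) = (f b :: 'a::semiring_1)"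
proof -
  assume "b < L"
  have "(\<Sum>c<L. f c * of_bool (c = b)) = (\<Sum>c<L. if c = b then f b else 0)"
    by (intro sum.cong) auto
  with \<open>b < L\<close> show ?thesis
    by simp
qed

lemma sum_atLeastLessThan_of_bool:
  "(\<Sum>c\<in>{b..<L}. f c) = (\<Sum>c<(L::nat). of_bool (b \<le> c) * (f c :: 'a::semiring_1))"
proof -
  have "(\<Sum>c<L. of_bool (b \<le> c) * f c) = (\<Sum>c<L. if c \<in> {c. b \<le> c} then f c else 0)"
    by (intro sum.cong) auto
  also have "\<dots> = (\<Sum>c\<in>{..<L} \<inter> {c. b \<le> c}. f c)"
    by (simp add: sum.inter_restrict)
  also have "{..<L} \<inter> {c. b \<le> c} = {b..<L}"
    by auto
  finally show ?thesis ..
qed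

lemma sum_telescope_bit: "(\<Sum>r<n. G r + G (Suc r)) = G 0 + (G n :: bit)"
  by (induction n) (simp_all add: algebra_simps)

lemma sum_window_telescope_bit:
  assumes "a < n"
  shows "(\<Sum>r<n. of_bool (r < a) * G r + of_bool (r \<le> a) * G (Suc r)) = G 0 + G a + (G (Suc a) :: bit)"
  using assms
proof (induction n)
  case (Suc m)
  show ?case
  proof (cases "a < m")
    case True
    then show ?thesis
      using Suc by simp
  next
    case False
    then have m: "m = a"
      using Suc.prems by simp
    have "(\<Sum>r<a. of_bool (r < a) * G r + of_bool (r \<le> a) * G (Suc r)) = (\<Sum>r<a. G r + G (Suc r))"
      by (intro sum.cong) auto
    then show ?thesis
      by (simp add: m sum_telescope_bit)
  qed
qed simp

lemma sum_list_concat: "sum_list (concat xss) = sum_list (map sum_list xss)"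
  by (induction xss) simp_all

lemma sum_list_map_upt_0: "sum_list (map f [0..<n]) = (\<Sum>i<n. f i)"
  by (simp add: interv_sum_list_conv_sum_set_nat atLeast0LessThan)

section \<open>Monomial matrices\<close>

lemma grid_eq: "grid L = {..<L} \<times> {..<L}"
  by (auto simp: grid_def)

lemma finite_grid [simp]: "finite (grid L)"
  by (simp add: grid_eq)

lemma finite_configs [simp]: "finite (configs L)"
proof -
  have "configs L = {x. \<forall>k. (k \<in> grid L \<longrightarrow> x k \<in> UNIV) \<and> (k \<notin> grid L \<longrightarrow> x k = False)}"
    by (auto simp: configs_def)
  then show ?thesis
    by (simp only:) (rule finite_set_of_finite_funs; simp add: grid_eq)
qed

lemma configs_iff_off_grid:
  assumes "\<And>k. k \<notin> grid L \<Longrightarrow> x k = y k"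
  shows "x \<in> configs L \<longleftrightarrow> y \<in> configs L"
  using assms by (auto simp: configs_def)

definition monomial :: "(config \<Rightarrow> config) \<Rightarrow> (config \<Rightarrow> complex) \<Rightarrow> qmat" where
  "monomial f \<phi> = (\<lambda>x y. if x = f y then \<phi> y else 0)"

definition monomial_on :: "nat \<Rightarrow> (config \<Rightarrow> config) \<Rightarrow> (config \<Rightarrow> complex) \<Rightarrow> qmat" where
  "monomial_on L f \<phi> = (\<lambda>x y. if y \<in> configs L \<and> x = f y then \<phi> y else 0)"

definition agree_on_configs :: "nat \<Rightarrow> qmat \<Rightarrow> qmat \<Rightarrow> bool" where
  "agree_on_configs L A B \<longleftrightarrow> (\<forall>x y. x \<in> configs L \<or> y \<in> configs L \<longrightarrow> A x y = B x y)"

lemma agree_on_configs_refl [simp]: "agree_on_configs L A A"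
  by (simp add: agree_on_configs_def)

lemma mmul_agree_on_configs:
  "agree_on_configs L A A' \<Longrightarrow> agree_on_configs L B B' \<Longrightarrow> mmul L A B = mmul L A' B'"
  unfolding agree_on_configs_def mmul_def by (intro ext sum.cong) auto

lemma agree_on_configs_monomial:
  assumes "\<And>y k. k \<notin> grid L \<Longrightarrow> f y k = y k"
  shows "agree_on_configs L (monomial f \<phi>) (monomial_on L f \<phi>)"
  using configs_iff_off_grid[of L "f _", OF assms]
  by (auto simp: agree_on_configs_def monomial_def monomial_on_def)

lemma monomial_on_cong:
  "(\<And>y. y \<in> configs L \<Longrightarrow> f y = f' y \<and> \<phi> y = \<phi>' y)
    \<Longrightarrow> monomial_on L f \<phi> = monomial_on L f' \<phi>'"
  unfolding monomial_on_def by (intro ext) auto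

lemma mmul_monomial_on:
  assumes "\<forall>y\<in>configs L. g y \<in> configs L"
  shows "mmul L (monomial_on L f \<phi>) (monomial_on L g \<psi>) = monomial_on L (f \<circ> g) (\<lambda>y. \<phi> (g y) * \<psi> y)"
proof (intro ext)
  fix x y
  have collapse: "(\<lambda>z. (if z \<in> configs L \<and> x = f z then \<phi> z else 0)
                        * (if y \<in> configs L \<and> z = g y then \<psi> y else 0))
     = (\<lambda>z. if z = g y then (if y \<in> configs L \<and> x = f (g y) then \<phi> (g y) * \<psi> y else 0) else 0)"
    using assms by auto
  show "mmul L (monomial_on L f \<phi>) (monomial_on L g \<psi>) x y
      = monomial_on L (f \<circ> g) (\<lambda>y. \<phi> (g y) * \<psi> y) x y"
    unfolding mmul_def monomial_on_def collapse using assms by (auto simp: sum.delta')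
qed

lemma adj_monomial_on:
  assumes "\<forall>y\<in>configs L. f y \<in> configs L \<and> g (f y) = y"
    and "\<forall>x\<in>configs L. g x \<in> configs L \<and> f (g x) = x"
  shows "adj (monomial_on L f \<phi>) = monomial_on L g (\<lambda>x. cnj (\<phi> (g x)))"
  unfolding adj_def monomial_on_def using assms by (intro ext) auto

definition sign :: "bit \<Rightarrow> complex" where
  "sign b = (if b = 0 then 1 else -1)"

lemma sign_add: "sign (a + b) = sign a * sign b"
  by (cases a; cases b) (simp_all add: sign_def)

lemma sign_0 [simp]: "sign 0 = 1"
  by (simp add: sign_def)

lemma cnj_sign [simp]: "cnj (sign a) = sign a"
  by (simp add: sign_def)

definition bits :: "config \<Rightarrow> site \<Rightarrow> bit" where
  "bits y k = of_bool (y k)"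

fun gate_perm :: "gate \<Rightarrow> config \<Rightarrow> config" where
  "gate_perm (CNOT a t) y = y(t := (y t \<noteq> y a))"
| "gate_perm (CZ a b) y = y"
| "gate_perm (Zg j) y = y"

fun gate_phase :: "gate \<Rightarrow> config \<Rightarrow> bit" where
  "gate_phase (CNOT a t) y = 0"
| "gate_phase (CZ a b) y = bits y a * bits y b"
| "gate_phase (Zg j) y = bits y j"

lemma gate_mat_monomial: "gate_mat g = monomial (gate_perm g) (\<lambda>y. sign (gate_phase g y))"
  by (cases g) (auto simp: monomial_def CNOTop_def CZop_def Zop_def sign_def bits_def fun_eq_iff)

lemma gate_perm_off_grid: "gate_qubits g \<subseteq> grid L \<Longrightarrow> k \<notin> grid L \<Longrightarrow> gate_perm g y k = y k"
  by (cases g) auto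

fun circ_phase :: "gate list \<Rightarrow> config \<Rightarrow> bit" where
  "circ_phase [] y = 0"
| "circ_phase (g # gs) y = gate_phase g y + circ_phase gs (gate_perm g y)"

lemma circ_phase_append:
  "circ_phase (xs @ ys) y = circ_phase xs y + circ_phase ys (fold gate_perm xs y)"
  by (induction xs arbitrary: y) (simp_all add: add.assoc)

definition circ_monomial :: "nat \<Rightarrow> gate list \<Rightarrow> qmat" where
  "circ_monomial L gs = monomial_on L (fold gate_perm gs) (\<lambda>y. sign (circ_phase gs y))"

lemma fold_gate_perm_off_grid:
  "\<forall>g\<in>set gs. gate_qubits g \<subseteq> grid L \<Longrightarrow> k \<notin> grid L \<Longrightarrow> fold gate_perm gs y k = y k"
  by (induction gs arbitrary: y) (auto simp: gate_perm_off_grid)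

lemma fold_gate_perm_configs:
  "\<forall>g\<in>set gs. gate_qubits g \<subseteq> grid L \<Longrightarrow> y \<in> configs L \<Longrightarrow> fold gate_perm gs y \<in> configs L"
  by (auto simp: configs_def fold_gate_perm_off_grid)

lemma mmul_circ_monomial:
  assumes "\<forall>g\<in>set gs. gate_qubits g \<subseteq> grid L"
  shows "mmul L (circ_monomial L hs) (circ_monomial L gs) = circ_monomial L (gs @ hs)"
  unfolding circ_monomial_def using assms
  by (subst mmul_monomial_on) (auto simp: fold_gate_perm_configs circ_phase_append sign_add intro!: monomial_on_cong)

lemma circ_mat_snoc:
  assumes grid: "\<forall>h\<in>set (gs @ [g]). gate_qubits h \<subseteq> grid L"
    and agree: "agree_on_configs L (circ_mat L gs) (circ_monomial L gs)"
  shows "circ_mat L (gs @ [g]) = circ_monomial L (gs @ [g])"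
proof -
  have gate: "agree_on_configs L (gate_mat g) (circ_monomial L [g])"
    unfolding gate_mat_monomial circ_monomial_def using grid
    by (simp, intro agree_on_configs_monomial) (auto simp: gate_perm_off_grid)
  have "circ_mat L (gs @ [g]) = mmul L (gate_mat g) (circ_mat L gs)"
    by (simp add: circ_mat_def)
  also have "\<dots> = mmul L (circ_monomial L [g]) (circ_monomial L gs)"
    using gate agree by (rule mmul_agree_on_configs)
  also have "\<dots> = circ_monomial L (gs @ [g])"
    using grid by (intro mmul_circ_monomial) simp
  finally show ?thesis .
qed

lemma circ_mat_agree:
  "\<forall>g\<in>set gs. gate_qubits g \<subseteq> grid L \<Longrightarrow> agree_on_configs L (circ_mat L gs) (circ_monomial L gs)"
proof (induction gs rule: rev_induct)
  case Nil
  then show ?case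
    by (auto simp: agree_on_configs_def circ_mat_def circ_monomial_def monomial_on_def ident_def)
next
  case (snoc g gs)
  then show ?case
    using circ_mat_snoc by (simp add: agree_on_configs_def)
qed

lemma mmul_circ_mat:
  assumes "\<forall>g\<in>set (gs @ hs). gate_qubits g \<subseteq> grid L"
  shows "mmul L (circ_mat L hs) (circ_monomial L gs) = circ_monomial L (gs @ hs)"
  using assms
  by (simp add: mmul_agree_on_configs [OF circ_mat_agree agree_on_configs_refl] mmul_circ_monomial)

fun proper_cnot :: "gate \<Rightarrow> bool" where
  "proper_cnot (CNOT a t) \<longleftrightarrow> a \<noteq> t"
| "proper_cnot _ \<longleftrightarrow> False"

fun diagonal_gate :: "gate \<Rightarrow> bool" where
  "diagonal_gate (CNOT a t) \<longleftrightarrow> False"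
| "diagonal_gate _ \<longleftrightarrow> True"

lemma circ_phase_cnots: "\<forall>g\<in>set gs. proper_cnot g \<Longrightarrow> circ_phase gs y = 0"
proof (induction gs arbitrary: y)
  case (Cons g gs)
  then show ?case by (cases g) auto
qed simp

lemma fold_gate_perm_rev_cnots:
  "\<forall>g\<in>set gs. proper_cnot g \<Longrightarrow> fold gate_perm (rev gs) (fold gate_perm gs y) = y"
proof (induction gs arbitrary: y)
  case (Cons g gs)
  then have "fold gate_perm (rev gs) (fold gate_perm gs (gate_perm g y)) = gate_perm g y"
    by simp
  with Cons.prems show ?case
    by (cases g) (auto simp: fun_eq_iff)
qed simp

lemma adj_circ_monomial_cnots:
  assumes "\<forall>g\<in>set gs. gate_qubits g \<subseteq> grid L \<and> proper_cnot g"
  shows "adj (circ_monomial L gs) = circ_monomial L (rev gs)"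
proof -
  have "fold gate_perm gs (fold gate_perm (rev gs) y) = y" for y
    using fold_gate_perm_rev_cnots[of "rev gs"] assms by simp
  then show ?thesis
    unfolding circ_monomial_def using assms
    by (subst adj_monomial_on [where g = "fold gate_perm (rev gs)"])
      (auto simp: fold_gate_perm_configs fold_gate_perm_rev_cnots circ_phase_cnots)
qed

lemma fold_gate_perm_diagonal: "\<forall>g\<in>set gs. diagonal_gate g \<Longrightarrow> fold gate_perm gs y = y"
proof (induction gs arbitrary: y)
  case (Cons g gs)
  then show ?case by (cases g) auto
qed simp

lemma circ_phase_diagonal:
  "\<forall>g\<in>set gs. diagonal_gate g \<Longrightarrow> circ_phase gs y = (\<Sum>g\<leftarrow>gs. gate_phase g y)"
proof (induction gs)
  case (Cons g gs)
  then show ?case by (cases g) auto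
qed simp

lemma circ_monomial_sandwich:
  assumes "\<forall>g\<in>set gs. proper_cnot g" and "\<forall>g\<in>set (ds @ es). diagonal_gate g"
  shows "circ_monomial L (gs @ ds @ rev gs @ es)
       = monomial_on L id (\<lambda>y. sign (circ_phase ds (fold gate_perm gs y) + circ_phase es y))"
  unfolding circ_monomial_def using assms
  by (intro monomial_on_cong)
    (simp add: circ_phase_append circ_phase_cnots fold_gate_perm_diagonal fold_gate_perm_rev_cnots)

section \<open>CNOT ladders\<close>

locale ladder_lines =
  fixes p :: "nat \<Rightarrow> 'c \<Rightarrow> site"
  assumes p_eq_iff [simp]: "p i c = p i' c' \<longleftrightarrow> i = i' \<and> c = c'"
begin

definition ladder_layers :: "'c list \<Rightarrow> nat \<Rightarrow> gate list list" where
  "ladder_layers cs n = map (\<lambda>i. map (\<lambda>c. CNOT (p (Suc i) c) (p i c)) cs) (rev [0..<n])"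

(* The gates of ladder_layers, ordered line by line as in C_up_gates and C_left_gates. *)
definition ladders :: "'c list \<Rightarrow> nat \<Rightarrow> gate list" where
  "ladders cs n = concat (map (\<lambda>c. concat (ladder_layers [c] n)) cs)"

definition suffix_parities :: "'c set \<Rightarrow> nat \<Rightarrow> (config \<Rightarrow> config) \<Rightarrow> bool" where
  "suffix_parities C n f \<longleftrightarrow>
     (\<forall>y k. (\<forall>i<n. \<forall>c\<in>C. k \<noteq> p i c) \<longrightarrow> f y k = y k) \<and>
     (\<forall>y. \<forall>c\<in>C. \<forall>i\<le>n. bits (f y) (p i c) = (\<Sum>i'\<in>{i..n}. bits y (p i' c)))"

lemma fold_cnot_layer:
  "distinct cs \<Longrightarrow> fold gate_perm (map (\<lambda>c. CNOT (p (Suc i) c) (p i c)) cs) y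
     = (\<lambda>k. y k \<noteq> (\<exists>c\<in>set cs. k = p i c \<and> y (p (Suc i) c)))"
proof (induction cs arbitrary: y)
  case (Cons c0 cs)
  then show ?case by (auto simp: fun_eq_iff)
qed simp

lemma suffix_paritiesI:
  assumes "\<And>y k. \<forall>i<n. \<forall>c\<in>C. k \<noteq> p i c \<Longrightarrow> f y k = y k"
    and "\<And>y c i. c \<in> C \<Longrightarrow> i \<le> n \<Longrightarrow> bits (f y) (p i c) = (\<Sum>i'\<in>{i..n}. bits y (p i' c))"
  shows "suffix_parities C n f"
  unfolding suffix_parities_def using assms by blast

lemma suffix_parities_fixes:
  "suffix_parities C n f \<Longrightarrow> \<forall>i<n. \<forall>c\<in>C. k \<noteq> p i c \<Longrightarrow> f y k = y k"
  unfolding suffix_parities_def by blast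

lemma suffix_parities_bits:
  "suffix_parities C n f \<Longrightarrow> c \<in> C \<Longrightarrow> i \<le> n
    \<Longrightarrow> bits (f y) (p i c) = (\<Sum>i'\<in>{i..n}. bits y (p i' c))"
  unfolding suffix_parities_def by blast

lemma suffix_parities_ladder_layers:
  assumes "distinct cs"
  shows "suffix_parities (set cs) n (fold gate_perm (concat (ladder_layers cs n)))"
proof (induction n)
  case 0
  then show ?case by (simp add: suffix_parities_def ladder_layers_def)
next
  case (Suc n)
  define f where "f = fold gate_perm (concat (ladder_layers cs n))"
  define layer where "layer = fold gate_perm (map (\<lambda>c. CNOT (p (Suc n) c) (p n c)) cs)"
  have f: "suffix_parities (set cs) n f"
    unfolding f_def by (rule Suc.IH)
  have layer: "layer y k = (y k \<noteq> (\<exists>c\<in>set cs. k = p n c \<and> y (p (Suc n) c)))" for y k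
    unfolding layer_def fold_cnot_layer [OF assms] ..
  have "fold gate_perm (concat (ladder_layers cs (Suc n))) = f \<circ> layer"
    by (simp add: f_def layer_def ladder_layers_def)
  moreover have "suffix_parities (set cs) (Suc n) (f \<circ> layer)"
  proof (rule suffix_paritiesI)
    fix y k
    assume k: "\<forall>i<Suc n. \<forall>c\<in>set cs. k \<noteq> p i c"
    have "f (layer y) k = layer y k"
      using k by (intro suffix_parities_fixes [OF f]) simp
    with k show "(f \<circ> layer) y k = y k"
      by (simp add: layer)
  next
    fix y c i
    assume c: "c \<in> set cs" and i: "i \<le> Suc n"
    show "bits ((f \<circ> layer) y) (p i c) = (\<Sum>i'\<in>{i..Suc n}. bits y (p i' c))"
    proof (cases "i = Suc n")
      case True
      have "f (layer y) (p (Suc n) c) = layer y (p (Suc n) c)"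
        by (intro suffix_parities_fixes [OF f]) simp
      with True show ?thesis
        by (simp add: layer bits_def)
    next
      case False
      with i have i: "i \<le> n" by simp
      have "bits ((f \<circ> layer) y) (p i c) = (\<Sum>i'\<in>{i..n}. bits (layer y) (p i' c))"
        using f c i by (simp add: suffix_parities_bits)
      also have "\<dots> = (\<Sum>i'\<in>{i..n}. bits y (p i' c) + (if i' = n then bits y (p (Suc n) c) else 0))"
        using c by (intro sum.cong) (auto simp: layer bits_def of_bool_neq_bit)
      also have "\<dots> = (\<Sum>i'\<in>{i..Suc n}. bits y (p i' c))"
        using i by (simp add: sum.distrib sum.cl_ivl_Suc)
      finally show ?thesis .
    qed
  qed
  ultimately show ?case
    by (simp only:)
qed

lemma suffix_parities_comp:
  assumes f: "suffix_parities C n f" and g: "suffix_parities D n g" and disjoint: "C \<inter> D = {}"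
  shows "suffix_parities (C \<union> D) n (g \<circ> f)"
proof (rule suffix_paritiesI)
  fix y k
  assume "\<forall>i<n. \<forall>c\<in>C \<union> D. k \<noteq> p i c"
  then show "(g \<circ> f) y k = y k"
    using suffix_parities_fixes [OF f] suffix_parities_fixes [OF g] by simp
next
  fix y c i
  assume c: "c \<in> C \<union> D" and i: "i \<le> n"
  show "bits ((g \<circ> f) y) (p i c) = (\<Sum>i'\<in>{i..n}. bits y (p i' c))"
  proof (cases "c \<in> C")
    case True
    with disjoint have "g (f y) (p i c) = f y (p i c)"
      by (intro suffix_parities_fixes [OF g]) auto
    then have "bits (g (f y)) (p i c) = bits (f y) (p i c)"
      by (simp add: bits_def)
    also have "\<dots> = (\<Sum>i'\<in>{i..n}. bits y (p i' c))"
      using True i by (rule suffix_parities_bits [OF f])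
    finally show ?thesis
      by simp
  next
    case False
    then have f_id: "f y (p i' c) = y (p i' c)" for i'
      by (intro suffix_parities_fixes [OF f]) auto
    have "bits (g (f y)) (p i c) = (\<Sum>i'\<in>{i..n}. bits (f y) (p i' c))"
      using False c i by (intro suffix_parities_bits [OF g]) auto
    also have "\<dots> = (\<Sum>i'\<in>{i..n}. bits y (p i' c))"
      by (simp add: bits_def f_id)
    finally show ?thesis
      by simp
  qed
qed

lemma suffix_parities_ladders:
  "distinct cs \<Longrightarrow> suffix_parities (set cs) n (fold gate_perm (ladders cs n))"
proof (induction cs)
  case Nil
  then show ?case by (simp add: suffix_parities_def ladders_def)
next
  case (Cons c cs)
  have "suffix_parities ({c} \<union> set cs) n
      (fold gate_perm (ladders cs n) \<circ> fold gate_perm (concat (ladder_layers [c] n)))"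
    using Cons suffix_parities_ladder_layers[of "[c]"] by (intro suffix_parities_comp) auto
  then show ?case
    by (simp add: ladders_def comp_def)
qed

lemma set_ladders: "set (ladders cs n) = set (concat (ladder_layers cs n))"
  by (auto simp: ladders_def ladder_layers_def)

lemma ladder_layers_gates:
  "g \<in> set (concat (ladder_layers cs n)) \<Longrightarrow> \<exists>i<n. \<exists>c\<in>set cs. g = CNOT (p (Suc i) c) (p i c)"
  by (auto simp: ladder_layers_def)

lemma ladder_layers_proper_cnot: "g \<in> set (concat (ladder_layers cs n)) \<Longrightarrow> proper_cnot g"
  by (drule ladder_layers_gates) auto

lemma ladder_layers_in_grid:
  assumes "\<And>i c. i \<le> n \<Longrightarrow> c \<in> set cs \<Longrightarrow> p i c \<in> grid L"
    and "g \<in> set (concat (ladder_layers cs n))"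
  shows "gate_qubits g \<subseteq> grid L"
  using ladder_layers_gates[OF assms(2)] assms(1) by fastforce

end

interpretation col: ladder_lines "\<lambda>i c. (i, c)"
  by unfold_locales auto

interpretation row: ladder_lines "\<lambda>i r. (r, i)"
  by unfold_locales auto

lemma C_up_gates_eq: "C_up_gates L = col.ladders [0..<L] (L - 1)"
  by (simp add: C_up_gates_def col.ladders_def col.ladder_layers_def)

lemma C_left_gates_eq: "C_left_gates L = row.ladders (filter even [0..<L]) (L - 1)"
  by (simp add: C_left_gates_def row.ladders_def row.ladder_layers_def)

lemma col_ladder_gates:
  assumes L: "1 \<le> L" and g: "g \<in> set (concat (col.ladder_layers [0..<L] (L - 1)))"
  shows "gate_qubits g \<subseteq> grid L \<and> proper_cnot g"
proof
  have "(i, c) \<in> grid L" if "i \<le> L - 1" "c \<in> set [0..<L]" for i c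
    using that L by (auto simp: grid_def)
  then show "gate_qubits g \<subseteq> grid L"
    using g by (rule col.ladder_layers_in_grid)
  show "proper_cnot g"
    using g by (rule col.ladder_layers_proper_cnot)
qed

lemma row_ladder_gates:
  assumes L: "1 \<le> L" and g: "g \<in> set (concat (row.ladder_layers (filter even [0..<L]) (L - 1)))"
  shows "gate_qubits g \<subseteq> grid L \<and> proper_cnot g"
proof
  have "(r, i) \<in> grid L" if "i \<le> L - 1" "r \<in> set (filter even [0..<L])" for i r
    using that L by (auto simp: grid_def)
  then show "gate_qubits g \<subseteq> grid L"
    using g by (rule row.ladder_layers_in_grid)
  show "proper_cnot g"
    using g by (rule row.ladder_layers_proper_cnot)
qed

section \<open>The phase exponent of W\<close>

definition delta :: "site \<Rightarrow> site \<Rightarrow> bit" where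
  "delta j k = of_bool (k = j)"

definition Cup_map :: "nat \<Rightarrow> (site \<Rightarrow> bit) \<Rightarrow> site \<Rightarrow> bit" where
  "Cup_map L Y = (\<lambda>(r, c). \<Sum>r'\<in>{r..<L}. Y (r', c))"

definition Cleft_map :: "nat \<Rightarrow> (site \<Rightarrow> bit) \<Rightarrow> site \<Rightarrow> bit" where
  "Cleft_map L Y = (\<lambda>(r, c). if even r then \<Sum>c'\<in>{c..<L}. Y (r, c') else Y (r, c))"

definition U_map :: "nat \<Rightarrow> (site \<Rightarrow> bit) \<Rightarrow> site \<Rightarrow> bit" where
  "U_map L Y = Cleft_map L (Cup_map L Y)"

definition CZ_form :: "nat \<Rightarrow> (site \<Rightarrow> bit) \<Rightarrow> bit" where
  "CZ_form L Y = (\<Sum>c<L. \<Sum>r<L - 1. Y (r, c) * Y (Suc r, c))"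

definition CZ_polar :: "nat \<Rightarrow> (site \<Rightarrow> bit) \<Rightarrow> (site \<Rightarrow> bit) \<Rightarrow> bit" where
  "CZ_polar L Y Z = (\<Sum>c<L. \<Sum>r<L - 1. Y (r, c) * Z (Suc r, c) + Z (r, c) * Y (Suc r, c))"

definition odd_rows_sum :: "nat \<Rightarrow> (site \<Rightarrow> bit) \<Rightarrow> bit" where
  "odd_rows_sum L Y = (\<Sum>r<L. \<Sum>c<L. of_bool (odd r) * Y (r, c))"

definition W_exponent :: "nat \<Rightarrow> (site \<Rightarrow> bit) \<Rightarrow> bit" where
  "W_exponent L Y = CZ_form L (U_map L Y) + odd_rows_sum L Y"

lemma U_map_add: "U_map L (\<lambda>k. Y k + Z k) = (\<lambda>k. U_map L Y k + U_map L Z k)"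
  by (auto simp: U_map_def Cup_map_def Cleft_map_def sum.distrib)

lemma CZ_form_add: "CZ_form L (\<lambda>k. Y k + Z k) = CZ_form L Y + CZ_form L Z + CZ_polar L Y Z"
proof -
  have "CZ_form L Y + CZ_form L Z + CZ_polar L Y Z
      = (\<Sum>c<L. \<Sum>r<L - 1. Y (r, c) * Y (Suc r, c) + Z (r, c) * Z (Suc r, c)
                          + (Y (r, c) * Z (Suc r, c) + Z (r, c) * Y (Suc r, c)))"
    by (simp add: CZ_form_def CZ_polar_def sum.distrib)
  then show ?thesis
    by (simp add: CZ_form_def algebra_simps)
qed

lemma odd_rows_sum_add: "odd_rows_sum L (\<lambda>k. Y k + Z k) = odd_rows_sum L Y + odd_rows_sum L Z"
  by (simp add: odd_rows_sum_def sum.distrib distrib_left)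

lemma W_exponent_add:
  "W_exponent L (\<lambda>k. Y k + Z k) = W_exponent L Y + W_exponent L Z + CZ_polar L (U_map L Y) (U_map L Z)"
  unfolding W_exponent_def U_map_add CZ_form_add odd_rows_sum_add by (simp add: ac_simps)

lemma delta_pair: "delta (a, b) (r, c) = of_bool (r = a) * of_bool (c = b)"
  by (simp add: delta_def)

lemma Cup_map_delta: "a < L \<Longrightarrow> Cup_map L (delta (a, b)) (r, c) = of_bool (r \<le> a \<and> c = b)"
proof -
  assume "a < L"
  have "Cup_map L (delta (a, b)) (r, c) = (\<Sum>r'\<in>{r..<L}. if r' = a then of_bool (c = b) else 0)"
    by (auto simp: Cup_map_def delta_def intro!: sum.cong)
  with \<open>a < L\<close> show ?thesis
    by auto
qed

lemma U_map_delta: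
  assumes "a < L" "b < L"
  shows "U_map L (delta (a, b)) (r, c) = of_bool (r \<le> a \<and> (if even r then c \<le> b else c = b))"
proof (cases "even r")
  case True
  have "U_map L (delta (a, b)) (r, c) = (\<Sum>c'\<in>{c..<L}. if c' = b then of_bool (r \<le> a) else 0)"
    using True assms by (auto simp: U_map_def Cleft_map_def Cup_map_delta intro!: sum.cong)
  then show ?thesis
    using True assms by auto
next
  case False
  then show ?thesis
    using assms by (simp add: U_map_def Cleft_map_def Cup_map_delta)
qed

lemma W_exponent_delta:
  assumes a: "a < L" and b: "b < L"
  shows "W_exponent L (delta (a, b)) = 0"
proof -
  have "U_map L (delta (a, b)) (r, c) * U_map L (delta (a, b)) (Suc r, c) = of_bool (r < a) * of_bool (c = b)"
    for r c
    using assms by (auto simp: U_map_delta)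
  then have "CZ_form L (U_map L (delta (a, b))) = (\<Sum>r<L - 1. of_bool (r < a))"
    using b by (simp add: CZ_form_def sum_distrib_right [symmetric] sum_times_of_bool_eq)
  also have "\<dots> = of_nat (card ({..<L - 1} \<inter> {r. r < a}))"
    by simp
  also have "{..<L - 1} \<inter> {r. r < a} = {..<a}"
    using a by auto
  finally have CZ: "CZ_form L (U_map L (delta (a, b))) = of_bool (odd a)"
    by (simp add: of_nat_bit)
  have "odd_rows_sum L (delta (a, b)) = (\<Sum>r<L. if r = a then of_bool (odd a) else 0)"
    unfolding odd_rows_sum_def delta_pair
    using b by (intro sum.cong) (auto simp: mult.assoc [symmetric] sum_times_of_bool_eq)
  also have "\<dots> = of_bool (odd a)"
    using a by simp
  finally show ?thesis
    by (simp add: W_exponent_def CZ)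
qed

lemma U_map_even_row: "even r \<Longrightarrow> U_map L Y (r, c) = (\<Sum>c'\<in>{c..<L}. Cup_map L Y (r, c'))"
  by (simp add: U_map_def Cleft_map_def)

lemma U_map_odd_row: "odd r \<Longrightarrow> U_map L Y (r, c) = Cup_map L Y (r, c)"
  by (simp add: U_map_def Cleft_map_def)

definition tail_sum :: "nat \<Rightarrow> (site \<Rightarrow> bit) \<Rightarrow> nat \<Rightarrow> nat \<Rightarrow> bit" where
  "tail_sum L Y b s = (\<Sum>c<L. of_bool (if even s then b \<le> c else c \<le> b) * Cup_map L Y (s, c))"

lemma U_map_pairing_delta_above:
  assumes a: "a < L" and b: "b < L"
  shows "(\<Sum>c<L. U_map L Y (r, c) * U_map L (delta (a, b)) (Suc r, c)) = of_bool (r < a) * tail_sum L Y b r"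
proof (cases "even r")
  case True
  have "(\<Sum>c<L. U_map L Y (r, c) * U_map L (delta (a, b)) (Suc r, c))
      = (\<Sum>c<L. (of_bool (r < a) * U_map L Y (r, c)) * of_bool (c = b))"
    using True a b by (intro sum.cong) (auto simp: U_map_delta)
  also have "\<dots> = of_bool (r < a) * U_map L Y (r, b)"
    using b by (rule sum_times_of_bool_eq)
  finally show ?thesis
    using True by (simp add: U_map_even_row tail_sum_def sum_atLeastLessThan_of_bool)
next
  case False
  have "(\<Sum>c<L. U_map L Y (r, c) * U_map L (delta (a, b)) (Suc r, c))
      = (\<Sum>c<L. of_bool (r < a) * (of_bool (c \<le> b) * Cup_map L Y (r, c)))"
    using False a b by (intro sum.cong) (auto simp: U_map_delta U_map_odd_row)
  then show ?thesis
    using False by (simp add: tail_sum_def sum_distrib_left)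
qed

lemma U_map_pairing_delta_below:
  assumes a: "a < L" and b: "b < L"
  shows "(\<Sum>c<L. U_map L (delta (a, b)) (r, c) * U_map L Y (Suc r, c))
       = of_bool (r \<le> a) * tail_sum L Y b (Suc r)"
proof (cases "even r")
  case True
  have "(\<Sum>c<L. U_map L (delta (a, b)) (r, c) * U_map L Y (Suc r, c))
      = (\<Sum>c<L. of_bool (r \<le> a) * (of_bool (c \<le> b) * Cup_map L Y (Suc r, c)))"
    using True a b by (intro sum.cong) (auto simp: U_map_delta U_map_odd_row)
  then show ?thesis
    using True by (simp add: tail_sum_def sum_distrib_left)
next
  case False
  have "(\<Sum>c<L. U_map L (delta (a, b)) (r, c) * U_map L Y (Suc r, c))
      = (\<Sum>c<L. (of_bool (r \<le> a) * U_map L Y (Suc r, c)) * of_bool (c = b))"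
    using False a b by (intro sum.cong) (auto simp: U_map_delta)
  also have "\<dots> = of_bool (r \<le> a) * U_map L Y (Suc r, b)"
    using b by (rule sum_times_of_bool_eq)
  finally show ?thesis
    using False by (simp add: U_map_even_row tail_sum_def sum_atLeastLessThan_of_bool)
qed

lemma CZ_polar_U_delta:
  assumes a: "a < L" and b: "b < L"
  shows "CZ_polar L (U_map L Y) (U_map L (delta (a, b)))
       = tail_sum L Y b 0 + tail_sum L Y b a + tail_sum L Y b (Suc a)"
proof -
  let ?f = "\<lambda>r. of_bool (r < a) * tail_sum L Y b r + of_bool (r \<le> a) * tail_sum L Y b (Suc r)"
  obtain n where L: "L = Suc n"
    using a by (cases L) auto
  have "CZ_polar L (U_map L Y) (U_map L (delta (a, b)))
      = (\<Sum>r<L - 1. \<Sum>c<L. U_map L Y (r, c) * U_map L (delta (a, b)) (Suc r, c)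
                              + U_map L (delta (a, b)) (r, c) * U_map L Y (Suc r, c))"
    unfolding CZ_polar_def by (rule sum.swap)
  also have "\<dots> = (\<Sum>r<n. ?f r)"
    by (simp only: sum.distrib U_map_pairing_delta_above [OF a b] U_map_pairing_delta_below [OF a b])
      (simp add: L)
  also have "\<dots> = (\<Sum>r<L. ?f r)"
    using a by (simp add: L tail_sum_def Cup_map_def)
  also have "\<dots> = tail_sum L Y b 0 + tail_sum L Y b a + tail_sum L Y b (Suc a)"
    using a by (rule sum_window_telescope_bit)
  finally show ?thesis .
qed

lemma tail_sum_eq_region:
  "tail_sum L Y b s = (\<Sum>c<L. \<Sum>r<L. of_bool (s \<le> r \<and> (if even s then b \<le> c else c \<le> b)) * Y (r, c))"
proof -
  have Cup: "Cup_map L Y (s, c) = (\<Sum>r<L. of_bool (s \<le> r) * Y (r, c))" for c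
    by (simp add: Cup_map_def sum_atLeastLessThan_of_bool)
  show ?thesis
    unfolding tail_sum_def Cup sum_distrib_left by (intro sum.cong refl) auto
qed

lemma lex_less_iff:
  fixes L c b x x' :: nat
  assumes "x < L" "x' < L"
  shows "L * c + x < L * b + x' \<longleftrightarrow> c < b \<or> c = b \<and> x < x'"
proof (cases c b rule: linorder_cases)
  case less
  then have "L * Suc c \<le> L * b"
    by (intro mult_le_mono2) simp
  then show ?thesis
    using less assms by simp
next
  case greater
  then have "L * Suc b \<le> L * c"
    by (intro mult_le_mono2) simp
  then show ?thesis
    using greater assms by simp
qed simp

lemma mZ_less_iff: "r < L \<Longrightarrow> a < L \<Longrightarrow> mZ L (r, c) < mZ L (a, b) \<longleftrightarrow> c < b \<or> c = b \<and> a < r"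
  unfolding mZ_def by (subst lex_less_iff) auto

lemma mS_less_iff:
  assumes "r < L" "c < L" "a < L" "b < L"
  shows "mS L (r, c) < mS L (a, b) \<longleftrightarrow> r < a \<or> r = a \<and> (if even a then c < b else b < c)"
proof -
  have mS: "mS L s = L * fst s + (if even (fst s) then snd s else L - 1 - snd s)" for s
    by (simp add: mS_def)
  show ?thesis
    unfolding mS fst_conv snd_conv using assms by (subst lex_less_iff) auto
qed

lemma tail_coefficients:
  assumes "r < L" "c < L" "a < L" "b < L"
  shows "(of_bool (b \<le> c)
         + of_bool (a \<le> r \<and> (if even a then b \<le> c else c \<le> b))
         + of_bool (Suc a \<le> r \<and> (if even (Suc a) then b \<le> c else c \<le> b)) :: bit)
       = of_bool (mZ L (r, c) < mZ L (a, b)) + of_bool (mS L (r, c) < mS L (a, b))"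
  unfolding mZ_less_iff [OF assms(1,3)] mS_less_iff [OF assms] of_bool_neq_bit [symmetric] of_bool_eq_iff
  by (cases "even a") auto

lemma sum_grid_filter:
  "(\<Sum>k\<in>{k\<in>grid L. P k}. Y k) = (\<Sum>c<L. \<Sum>r<L. of_bool (P (r, c)) * (Y (r, c) :: bit))"
proof -
  have "(\<Sum>k\<in>{k\<in>grid L. P k}. Y k) = (\<Sum>k\<in>grid L. if P k then Y k else 0)"
    by (simp add: sum.inter_filter)
  also have "\<dots> = (\<Sum>r<L. \<Sum>c<L. if P (r, c) then Y (r, c) else 0)"
    by (simp add: grid_eq sum.cartesian_product)
  also have "\<dots> = (\<Sum>c<L. \<Sum>r<L. if P (r, c) then Y (r, c) else 0)"
    by (rule sum.swap)
  also have "\<dots> = (\<Sum>c<L. \<Sum>r<L. of_bool (P (r, c)) * Y (r, c))"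
    by (intro sum.cong refl) simp
  finally show ?thesis .
qed

theorem W_exponent_flip:
  assumes "j \<in> grid L"
  shows "W_exponent L (\<lambda>k. Y k + delta j k) + W_exponent L Y
       = (\<Sum>k\<in>{k\<in>grid L. mZ L k < mZ L j}. Y k) + (\<Sum>k\<in>{k\<in>grid L. mS L k < mS L j}. Y k)"
proof -
  obtain a b where j: "j = (a, b)" and a: "a < L" and b: "b < L"
    using assms by (cases j) (auto simp: grid_def)
  have "W_exponent L (\<lambda>k. Y k + delta (a, b) k) + W_exponent L Y
      = CZ_polar L (U_map L Y) (U_map L (delta (a, b)))"
    by (simp add: W_exponent_add W_exponent_delta a b ac_simps)
  also have "\<dots> = tail_sum L Y b 0 + tail_sum L Y b a + tail_sum L Y b (Suc a)"
    using a b by (rule CZ_polar_U_delta)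
  also have "\<dots> = (\<Sum>c<L. \<Sum>r<L. (of_bool (b \<le> c)
         + of_bool (a \<le> r \<and> (if even a then b \<le> c else c \<le> b))
         + of_bool (Suc a \<le> r \<and> (if even (Suc a) then b \<le> c else c \<le> b))) * Y (r, c))"
    by (simp only: tail_sum_eq_region distrib_right sum.distrib) simp
  also have "\<dots> = (\<Sum>c<L. \<Sum>r<L. (of_bool (mZ L (r, c) < mZ L (a, b))
                                      + of_bool (mS L (r, c) < mS L (a, b))) * Y (r, c))"
    by (intro sum.cong refl, subst tail_coefficients) (use a b in auto)
  also have "\<dots> = (\<Sum>k\<in>{k\<in>grid L. mZ L k < mZ L (a, b)}. Y k)
                 + (\<Sum>k\<in>{k\<in>grid L. mS L k < mS L (a, b)}. Y k)"
    by (simp add: sum_grid_filter distrib_right sum.distrib)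
  finally show ?thesis
    by (simp add: j)
qed

lemma CZ_form_U_circuit:
  assumes L: "1 \<le> L"
    and up: "col.suffix_parities (set [0..<L]) (L - 1) fu"
    and left: "row.suffix_parities (set (filter even [0..<L])) (L - 1) fl"
  shows "CZ_form L (bits (fl (fu y))) = CZ_form L (U_map L (bits y))"
proof -
  have Cup: "bits (fu y) (r, c) = Cup_map L (bits y) (r, c)" if "r < L" "c < L" for r c
  proof -
    have "bits (fu y) (r, c) = (\<Sum>r'\<in>{r..L - 1}. bits y (r', c))"
      using up that unfolding col.suffix_parities_def by auto
    also have "{r..L - 1} = {r..<L}"
      using L by auto
    finally show ?thesis
      by (simp add: Cup_map_def)
  qed
  have U: "bits (fl (fu y)) (r, c) = U_map L (bits y) (r, c)" if "r < L" "c < L" for r c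
  proof (cases "even r")
    case True
    have "bits (fl (fu y)) (r, c) = (\<Sum>c'\<in>{c..L - 1}. bits (fu y) (r, c'))"
      using left that True unfolding row.suffix_parities_def by auto
    also have "\<dots> = (\<Sum>c'\<in>{c..<L}. Cup_map L (bits y) (r, c'))"
      using L that by (intro sum.cong) (auto simp: Cup)
    finally show ?thesis
      using True by (simp add: U_map_even_row)
  next
    case False
    then have "fl (fu y) (r, c) = fu y (r, c)"
      using left unfolding row.suffix_parities_def by auto
    then show ?thesis
      using False that by (simp add: U_map_odd_row Cup [symmetric] bits_def)
  qed
  show ?thesis
    unfolding CZ_form_def by (intro sum.cong refl) (simp add: U)
qed

lemma circ_monomial_eq_W_exponent:
  assumes L: "1 \<le> L"
    and up: "col.suffix_parities (set [0..<L]) (L - 1) (fold gate_perm us)"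
    and left: "row.suffix_parities (set (filter even [0..<L])) (L - 1) (fold gate_perm ls)"
    and cnots: "\<forall>g\<in>set (us @ ls). proper_cnot g"
    and diagonal: "\<forall>g\<in>set (ds @ es). diagonal_gate g"
    and ds: "\<And>y. circ_phase ds y = CZ_form L (bits y)"
    and es: "\<And>y. circ_phase es y = odd_rows_sum L (bits y)"
  shows "circ_monomial L ((us @ ls) @ ds @ rev (us @ ls) @ es)
       = monomial_on L id (\<lambda>y. sign (W_exponent L (bits y)))"
  unfolding circ_monomial_sandwich [OF cnots diagonal] ds es W_exponent_def
  using CZ_form_U_circuit [OF L up left] by simp

lemma circ_phase_C_Z_gates: "circ_phase (C_Z_gates L) y = CZ_form L (bits y)"
  by (simp add: circ_phase_diagonal C_Z_gates_def CZ_form_def map_concat sum_list_concat o_def sum_list_map_upt_0)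

lemma circ_phase_Z_odd_gates: "circ_phase (Z_odd_gates L) y = odd_rows_sum L (bits y)"
proof -
  have "circ_phase (Z_odd_gates L) y = (\<Sum>r<L. if odd r then \<Sum>c<L. bits y (r, c) else 0)"
    by (simp add: circ_phase_diagonal Z_odd_gates_def map_concat sum_list_concat o_def
        sum_list_map_upt_0 sum_list_map_filter')
  also have "\<dots> = odd_rows_sum L (bits y)"
    unfolding odd_rows_sum_def by (intro sum.cong refl) auto
  finally show ?thesis .
qed

lemma U_gates:
  assumes "1 \<le> L"
  shows "\<forall>g\<in>set (C_up_gates L @ C_left_gates L). gate_qubits g \<subseteq> grid L \<and> proper_cnot g"
  using col_ladder_gates [OF assms] row_ladder_gates [OF assms]
  by (auto simp: C_up_gates_eq C_left_gates_eq col.set_ladders row.set_ladders)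

lemma Uc_eq_circ_monomial: "1 \<le> L \<Longrightarrow> Uc L = circ_monomial L (C_up_gates L @ C_left_gates L)"
  using U_gates [of L] unfolding Uc_def C_left_def C_up_def
  by (auto simp: mmul_agree_on_configs [OF circ_mat_agree circ_mat_agree] mmul_circ_monomial)

lemma Wc_eq_W_exponent:
  assumes L: "1 \<le> L"
  shows "Wc L = monomial_on L id (\<lambda>y. sign (W_exponent L (bits y)))"
proof -
  let ?U = "C_up_gates L @ C_left_gates L" and ?CZ = "C_Z_gates L" and ?Z = "Z_odd_gates L"
  note U_gates = U_gates [OF L]
  have diagonal_gates: "\<forall>g\<in>set (?CZ @ ?Z). gate_qubits g \<subseteq> grid L \<and> diagonal_gate g"
    by (auto simp: C_Z_gates_def Z_odd_gates_def grid_def)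
  have "mmul L (C_Zm L) (Uc L) = circ_monomial L (?U @ ?CZ)"
    unfolding C_Zm_def Uc_eq_circ_monomial [OF L] using U_gates diagonal_gates
    by (intro mmul_circ_mat) auto
  then have "C2D L = mmul L (circ_monomial L (rev ?U)) (circ_monomial L (?U @ ?CZ))"
    unfolding C2D_def using U_gates by (simp add: Uc_eq_circ_monomial [OF L] adj_circ_monomial_cnots)
  also have "\<dots> = circ_monomial L ((?U @ ?CZ) @ rev ?U)"
    using U_gates diagonal_gates by (intro mmul_circ_monomial) auto
  finally have C2D: "C2D L = circ_monomial L ((?U @ ?CZ) @ rev ?U)" .
  have "Wc L = circ_monomial L (((?U @ ?CZ) @ rev ?U) @ ?Z)"
    unfolding Wc_def C2D using U_gates diagonal_gates by (intro mmul_circ_mat) auto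
  also have "\<dots> = circ_monomial L (?U @ ?CZ @ rev ?U @ ?Z)"
    by (simp only: append_assoc)
  also have "\<dots> = monomial_on L id (\<lambda>y. sign (W_exponent L (bits y)))"
  proof (rule circ_monomial_eq_W_exponent [OF L _ _ _ _ circ_phase_C_Z_gates circ_phase_Z_odd_gates])
    show "col.suffix_parities (set [0..<L]) (L - 1) (fold gate_perm (C_up_gates L))"
      unfolding C_up_gates_eq by (rule col.suffix_parities_ladders) simp
    show "row.suffix_parities (set (filter even [0..<L])) (L - 1) (fold gate_perm (C_left_gates L))"
      unfolding C_left_gates_eq by (rule row.suffix_parities_ladders) simp
  qed (use U_gates diagonal_gates in auto)
  finally show ?thesis .
qed

section \<open>Conjugating Majorana operators\<close>

lemma sign_sum_bits: "finite S \<Longrightarrow> sign (\<Sum>k\<in>S. bits y k) = (-1) ^ card {k\<in>S. y k}"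
proof -
  assume "finite S"
  then have "(\<Sum>k\<in>S. bits y k) = of_nat (card (S \<inter> {k. y k}))"
    by (simp add: bits_def)
  moreover have "S \<inter> {k. y k} = {k\<in>S. y k}"
    by auto
  ultimately show ?thesis
    by (simp add: of_nat_bit sign_def)
qed

lemma bits_flip: "bits (flip j y) = (\<lambda>k. bits y k + delta j k)"
  by (auto simp: bits_def flip_def delta_def fun_eq_iff)

lemma majorana_monomial:
  assumes j: "j \<in> grid L"
  shows "majorana L m (j, b) = monomial_on L (flip j)
     (\<lambda>y. (if b then (if y j then - \<i> else \<i>) else 1) * sign (\<Sum>k\<in>{k\<in>grid L. m k < m j}. bits y k))"
proof -
  have XY: "(if b then Yop j else Xop j) = monomial (flip j) (\<lambda>y. if b then (if y j then - \<i> else \<i>) else 1)"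
    by (auto simp: Xop_def Yop_def monomial_def fun_eq_iff)
  have Z: "Zprod {k\<in>grid L. m k < m j} = monomial id (\<lambda>y. sign (\<Sum>k\<in>{k\<in>grid L. m k < m j}. bits y k))"
    by (auto simp: Zprod_def monomial_def sign_sum_bits fun_eq_iff)
  have "majorana L m (j, b)
      = mmul L (monomial_on L (flip j) (\<lambda>y. if b then (if y j then - \<i> else \<i>) else 1))
               (monomial_on L id (\<lambda>y. sign (\<Sum>k\<in>{k\<in>grid L. m k < m j}. bits y k)))"
    unfolding majorana_def Let_def fst_conv snd_conv XY Z
    using j by (intro mmul_agree_on_configs agree_on_configs_monomial) (auto simp: flip_def)
  then show ?thesis
    by (simp add: mmul_monomial_on id_def comp_def)
qed

lemma conj_diagonal_sign:
  assumes "\<forall>y\<in>configs L. f y \<in> configs L"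
  shows "mmul L (mmul L (monomial_on L id (\<lambda>y. sign (E y))) (monomial_on L f \<phi>))
                (adj (monomial_on L id (\<lambda>y. sign (E y))))
       = monomial_on L f (\<lambda>y. sign (E (f y) + E y) * \<phi> y)"
proof -
  have "adj (monomial_on L id (\<lambda>y. sign (E y))) = monomial_on L id (\<lambda>y. sign (E y))"
    by (subst adj_monomial_on [where g = id]) simp_all
  then show ?thesis
    using assms by (simp add: mmul_monomial_on sign_add ac_simps)
qed

lemma maps_encoding_diagonal_sign:
  assumes "\<And>j y. j \<in> grid L \<Longrightarrow> E (flip j y) + E y
            = (\<Sum>k\<in>{k\<in>grid L. m k < m j}. bits y k) + (\<Sum>k\<in>{k\<in>grid L. m' k < m' j}. bits y k)"
  shows "maps_encoding L (monomial_on L id (\<lambda>y. sign (E y))) m m'"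
  unfolding maps_encoding_def
proof (intro ballI allI)
  fix j b
  assume j: "j \<in> grid L"
  have "\<forall>y\<in>configs L. flip j y \<in> configs L"
    using j by (auto simp: configs_def flip_def)
  note conj = conj_diagonal_sign [OF this]
  let ?S = "\<lambda>m y. \<Sum>k\<in>{k\<in>grid L. m k < m j}. bits y k"
  have sign: "sign (E (flip j y) + E y) * sign (?S m y) = sign (?S m' y)" for y
  proof -
    have "sign (E (flip j y) + E y) * sign (?S m y) = sign ((?S m y + ?S m' y) + ?S m y)"
      by (simp only: assms [OF j] sign_add)
    also have "\<dots> = sign (?S m' y)"
      by (simp add: ac_simps)
    finally show ?thesis .
  qed
  show "mmul L (mmul L (monomial_on L id (\<lambda>y. sign (E y))) (majorana L m (j, b)))
      (adj (monomial_on L id (\<lambda>y. sign (E y)))) = majorana L m' (j, b)"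
    unfolding majorana_monomial [OF j] conj
    by (intro monomial_on_cong) (simp add: sign [symmetric] ac_simps)
qed

section \<open>A layered circuit for W\<close>

lemma is_layer_map:
  assumes "distinct xs"
    and "\<And>x x'. x \<in> set xs \<Longrightarrow> x' \<in> set xs \<Longrightarrow> x \<noteq> x' \<Longrightarrow> gate_qubits (f x) \<inter> gate_qubits (f x') = {}"
  shows "is_layer (map f xs)"
  unfolding is_layer_def
proof (intro allI impI)
  fix i j
  assume "i < length (map f xs)" "j < length (map f xs)" "i \<noteq> j"
  with assms show "gate_qubits (map f xs ! i) \<inter> gate_qubits (map f xs ! j) = {}"
    by (simp add: nth_eq_iff_index_eq)
qed

lemma is_layer_rev: "is_layer ly \<Longrightarrow> is_layer (rev ly)"
  unfolding is_layer_def
proof (intro allI impI)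
  fix i j
  assume "\<forall>i<length ly. \<forall>j<length ly. i \<noteq> j \<longrightarrow> gate_qubits (ly ! i) \<inter> gate_qubits (ly ! j) = {}"
    and "i < length (rev ly)" "j < length (rev ly)" "i \<noteq> j"
  then show "gate_qubits (rev ly ! i) \<inter> gate_qubits (rev ly ! j) = {}"
    by (simp add: rev_nth)
qed

definition U_layers :: "nat \<Rightarrow> gate list list" where
  "U_layers L = col.ladder_layers [0..<L] (L - 1) @ row.ladder_layers (filter even [0..<L]) (L - 1)"

definition CZ_layers :: "nat \<Rightarrow> gate list list" where
  "CZ_layers L = map (\<lambda>r. map (\<lambda>c. CZ (r, c) (Suc r, c)) [0..<L]) [0..<L - 1]"

definition Z_odd_layers :: "nat \<Rightarrow> gate list list" where
  "Z_odd_layers L = map (\<lambda>r. map (\<lambda>c. Zg (r, c)) [0..<L]) (filter odd [0..<L])"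

(* The final pair of cancelling Z gates only makes the circuit nonempty: for L = 1 all other layers
   are empty, and circ_mat of the empty circuit is ident, which differs from Wc L outside configs L. *)
definition W_layers :: "nat \<Rightarrow> gate list list" where
  "W_layers L = U_layers L @ CZ_layers L @ rev (map rev (U_layers L)) @ Z_odd_layers L
               @ [[Zg (0, 0)], [Zg (0, 0)]]"

lemma circ_phase_CZ_layers: "circ_phase (concat (CZ_layers L)) y = CZ_form L (bits y)"
proof -
  have "circ_phase (concat (CZ_layers L)) y = (\<Sum>r<L - 1. \<Sum>c<L. bits y (r, c) * bits y (Suc r, c))"
    by (simp add: circ_phase_diagonal CZ_layers_def map_concat sum_list_concat o_def sum_list_map_upt_0)
  also have "\<dots> = CZ_form L (bits y)"
    unfolding CZ_form_def by (rule sum.swap)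
  finally show ?thesis .
qed

lemma circ_mat_W_layers:
  assumes L: "1 \<le> L"
  shows "circ_mat L (concat (W_layers L)) = Wc L"
proof -
  let ?up = "concat (col.ladder_layers [0..<L] (L - 1))"
    and ?left = "concat (row.ladder_layers (filter even [0..<L]) (L - 1))"
    and ?CZ = "concat (CZ_layers L)" and ?Z = "Z_odd_gates L @ [Zg (0, 0), Zg (0, 0)]"
  have U_gates: "\<forall>g\<in>set (?up @ ?left). gate_qubits g \<subseteq> grid L \<and> proper_cnot g"
    using col_ladder_gates [OF L] row_ladder_gates [OF L] by auto
  have diagonal_gates: "\<forall>g\<in>set (?CZ @ ?Z). gate_qubits g \<subseteq> grid L \<and> diagonal_gate g"
    using L by (auto simp: CZ_layers_def Z_odd_gates_def grid_def)
  define gs where "gs = (?up @ ?left) @ ?CZ @ rev (?up @ ?left) @ Z_odd_gates L @ [Zg (0, 0)]"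
  have W_concat: "concat (W_layers L) = gs @ [Zg (0, 0)]"
    by (simp add: gs_def W_layers_def U_layers_def Z_odd_layers_def Z_odd_gates_def rev_concat rev_map)
  have "\<forall>g\<in>set (gs @ [Zg (0, 0)]). gate_qubits g \<subseteq> grid L"
    using U_gates diagonal_gates L by (auto simp: gs_def grid_def)
  then have "circ_mat L (concat (W_layers L)) = circ_monomial L (gs @ [Zg (0, 0)])"
    unfolding W_concat by (intro circ_mat_snoc circ_mat_agree) auto
  also have "\<dots> = circ_monomial L ((?up @ ?left) @ ?CZ @ rev (?up @ ?left) @ ?Z)"
    by (simp add: gs_def)
  also have "\<dots> = monomial_on L id (\<lambda>y. sign (W_exponent L (bits y)))"
  proof (rule circ_monomial_eq_W_exponent [OF L _ _ _ _ circ_phase_CZ_layers])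
    show "col.suffix_parities (set [0..<L]) (L - 1) (fold gate_perm ?up)"
      by (rule col.suffix_parities_ladder_layers) simp
    show "row.suffix_parities (set (filter even [0..<L])) (L - 1) (fold gate_perm ?left)"
      by (rule row.suffix_parities_ladder_layers) simp
    show "circ_phase ?Z y = odd_rows_sum L (bits y)" for y
      by (simp add: circ_phase_append circ_phase_Z_odd_gates fold_gate_perm_diagonal diagonal_gates)
  qed (use U_gates diagonal_gates in auto)
  also have "\<dots> = Wc L"
    using L by (rule Wc_eq_W_exponent [symmetric])
  finally show ?thesis .
qed

lemma W_layers_nn_gates: "1 \<le> L \<Longrightarrow> \<forall>g\<in>set (concat (W_layers L)). nn_gate L g"
  by (auto simp: W_layers_def U_layers_def col.ladder_layers_def row.ladder_layers_def CZ_layers_def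
      Z_odd_layers_def grid_def l1dist_def)

lemma W_layers_are_layers: "\<forall>ly\<in>set (W_layers L). is_layer ly"
proof -
  have "\<forall>ly\<in>set (U_layers L @ CZ_layers L @ Z_odd_layers L). is_layer ly"
    by (auto simp: U_layers_def col.ladder_layers_def row.ladder_layers_def CZ_layers_def
        Z_odd_layers_def intro!: is_layer_map)
  moreover have "is_layer [g]" for g
    by (simp add: is_layer_def)
  ultimately show ?thesis
    by (auto simp: W_layers_def intro: is_layer_rev)
qed

lemma W_layers_width: "1 \<le> L \<Longrightarrow> \<forall>ly\<in>set (W_layers L). length ly \<le> L"
  using length_filter_le [of even "[0..<L]"]
  by (auto simp: W_layers_def U_layers_def col.ladder_layers_def row.ladder_layers_def CZ_layers_def
      Z_odd_layers_def)

lemma W_layers_depth: "1 \<le> L \<Longrightarrow> length (W_layers L) \<le> 8 * L"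
  using length_filter_le [of odd "[0..<L]"]
  by (simp add: W_layers_def U_layers_def col.ladder_layers_def row.ladder_layers_def CZ_layers_def
      Z_odd_layers_def)

lemma W_layers_size: "1 \<le> L \<Longrightarrow> length (concat (W_layers L)) \<le> 8 * (L * L)"
proof -
  assume L: "1 \<le> L"
  have "length (concat (W_layers L)) = (\<Sum>ly\<leftarrow>W_layers L. length ly)"
    by (simp add: length_concat)
  also have "\<dots> \<le> (\<Sum>ly\<leftarrow>W_layers L. L)"
    using W_layers_width [OF L] by (intro sum_list_mono) simp
  also have "\<dots> \<le> 8 * L * L"
    using W_layers_depth [OF L] by (simp add: sum_list_triv)
  finally show ?thesis
    by (simp add: ac_simps)
qed

theorem mainTheorem4:
  shows "(\<forall>L\<ge>1. maps_encoding L (Wc L) (mZ L) (mS L) \<and> maps_encoding L (Wc L) (mS L) (mZ L))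
       \<and> (\<exists>K::nat. \<forall>L\<ge>1. \<exists>layers :: gate list list.
            (\<forall>g\<in>set (concat layers). nn_gate L g)
          \<and> (\<forall>ly\<in>set layers. is_layer ly)
          \<and> circ_mat L (concat layers) = Wc L
          \<and> length (concat layers) \<le> K * (L * L)
          \<and> length layers \<le> K * L)"
proof (intro conjI allI impI exI [of _ "8::nat"])
  fix L :: nat
  assume L: "L \<ge> 1"
  have flip: "W_exponent L (bits (flip j y)) + W_exponent L (bits y)
      = (\<Sum>k\<in>{k\<in>grid L. mZ L k < mZ L j}. bits y k) + (\<Sum>k\<in>{k\<in>grid L. mS L k < mS L j}. bits y k)"
    if "j \<in> grid L" for j y
    unfolding bits_flip using that by (rule W_exponent_flip)
  show "maps_encoding L (Wc L) (mZ L) (mS L)"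
    unfolding Wc_eq_W_exponent [OF L] by (rule maps_encoding_diagonal_sign) (rule flip)
  show "maps_encoding L (Wc L) (mS L) (mZ L)"
    unfolding Wc_eq_W_exponent [OF L] by (rule maps_encoding_diagonal_sign) (subst (2) add.commute, rule flip)
next
  fix L :: nat
  assume L: "L \<ge> 1"
  show "\<exists>layers. (\<forall>g\<in>set (concat layers). nn_gate L g) \<and> (\<forall>ly\<in>set layers. is_layer ly)
      \<and> circ_mat L (concat layers) = Wc L \<and> length (concat layers) \<le> 8 * (L * L) \<and> length layers \<le> 8 * L"
    using W_layers_nn_gates [OF L] W_layers_are_layers circ_mat_W_layers [OF L] W_layers_size [OF L]
      W_layers_depth [OF L] by blast
qed

end
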